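(* Let $p>1$. For $c\ge0$ let $N(c)\ge0$ be defined by $N(c)^2+\frac{2}{p+1}N(c)^{p+1}=c$, and let $L(c)=4\int_0^1\bigl(1-z^2+\frac{2}{p+1}N(c)^{p-1}(1-z^{p+1})\bigr)^{-1/2}dz$ (the minimal period of the solutions of $\ddot y+y+|y|^{p-1}y=0$ with $\dot y^2+y^2+\frac{2}{p+1}|y|^{p+1}=c$, and $L(0)=2\pi$). Then $M=L^{-1}:(0,2\pi]\to[0,\infty)$ is $C^\infty$ on $(0,2\pi)$ and there is a constant $\alpha>0$ such that, as $s\to2\pi-$, $$M(s)=\alpha(2\pi-s)^{\frac{2}{p-1}}(1+O(2\pi-s)),\qquad \sqrt{M(s)}=\sqrt\alpha(2\pi-s)^{\frac1{p-1}}(1+O(2\pi-s)),$$ $$M'(s)=-\tfrac{2\alpha}{p-1}(2\pi-s)^{\frac{3-p}{p-1}}(1+O(2\pi-s)),\qquad (\sqrt M)'(s)=-\tfrac{\sqrt\alpha}{p-1}(2\pi-s)^{\frac{2-p}{p-1}}(1+O(2\pi-s)),$$ $$M''(s)=\tfrac{2\alpha(3-p)}{(p-1)^2}(2\pi-s)^{\frac{4-2p}{p-1}}(1+O(2\pi-s)),\qquad (\sqrt M)''(s)=\tfrac{\sqrt\alpha(2-p)}{(p-1)^2}(2\pi-s)^{\frac{3-2p}{p-1}}(1+O(2\pi-s)).$$ *)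

theory Defs
  imports "HOL-Analysis.Analysis" "HOL-Library.Landau_Symbols"
begin

definition Namp :: "real \<Rightarrow> real \<Rightarrow> real" where
  "Namp p c = (THE n. n \<ge> 0 \<and> n\<^sup>2 + 2 / (p + 1) * n powr (p + 1) = c)"

text \<open>Minimal period L(c) (integrand is improper at z = 1; Henstock-Kurzweil integral).\<close>
definition Lper :: "real \<Rightarrow> real \<Rightarrow> real" where
  "Lper p c = 4 * integral {0..1}
     (\<lambda>z. (1 - z\<^sup>2 + 2 / (p + 1) * Namp p c powr (p - 1) * (1 - z powr (p + 1))) powr (-1/2))"

definition smooth_on_real :: "(real \<Rightarrow> real) \<Rightarrow> real set \<Rightarrow> bool" where
  "smooth_on_real f S \<longleftrightarrow> (\<forall>k. \<forall>x\<in>S. ((deriv ^^ k) f) differentiable (at x))"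

text \<open>f(s) = C (2pi - s)^e (1 + O(2pi - s)) as s -> 2pi-, read as
  f(s) - C (2pi-s)^e = O((2pi-s)^(e+1)).\<close>
definition asymp_2pi :: "(real \<Rightarrow> real) \<Rightarrow> real \<Rightarrow> real \<Rightarrow> bool" where
  "asymp_2pi f C e \<longleftrightarrow>
     (\<lambda>s. f s - C * (2*pi - s) powr e) \<in> O[at_left (2*pi)](\<lambda>s. (2*pi - s) powr (e + 1))"

end

theory Submission
  imports Defs
begin

text \<open>Put \<open>u = 2/(p+1) N(c)\<^bsup>p-1\<^esup>\<close>. Then \<open>c = N\<^sup>2 (1 + u)\<close>, and the substitution
  \<open>z = 1 - t\<^sup>2\<close> turns \<open>L(c)\<close> into the proper integral
  \<open>8 \<integral>\<^sub>0\<^sup>1 (2 - t\<^sup>2 + u B(t))\<^bsup>-1/2\<^esup> dt\<close> with \<open>B\<close> continuous and \<open>1 \<le> B \<le> p + 1\<close>.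
  Differentiating under the integral sign shows that this is a smooth, strictly decreasing
  function of \<open>u\<close> on a neighbourhood of \<open>[0, \<infinity>)\<close>, equal to \<open>2\<pi>\<close> at \<open>u = 0\<close> and tending
  to \<open>0\<close>; so \<open>L\<close> is a bijection onto \<open>(0, 2\<pi>]\<close> with a smooth inverse. By Hadamard's lemma
  \<open>2\<pi> - L = u G(u)\<close> with \<open>G\<close> smooth and positive, which makes the inverse
  \<open>M(s) = (2\<pi> - s)\<^bsup>2/(p-1)\<^esup> W(s)\<close> near \<open>2\<pi>\<close> with \<open>W\<close> smooth and \<open>W(2\<pi>) > 0\<close>.
  The six expansions then hold with \<open>\<alpha> = W(2\<pi>)\<close>, because the derivatives of
  \<open>(x\<^sub>0 - s)\<^bsup>E\<^esup> W(s)\<close> have the same shape with \<open>E\<close> lowered by one.\<close>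

section \<open>Functions of class \<open>C\<^sup>k\<close> on open sets of reals\<close>

fun Ck :: "nat \<Rightarrow> (real \<Rightarrow> real) \<Rightarrow> real set \<Rightarrow> bool" where
  "Ck 0 f S = continuous_on S f"
| "Ck (Suc k) f S = ((\<forall>x\<in>S. f differentiable (at x)) \<and> Ck k (deriv f) S)"

lemma Ck_cong:
  assumes "open S" "\<And>x. x \<in> S \<Longrightarrow> f x = g x" "Ck k f S"
  shows "Ck k g S"
  using assms
proof (induction k arbitrary: f g)
  case 0
  then show ?case using continuous_on_cong by (metis Ck.simps(1))
next
  case (Suc k)
  have diff: "g differentiable (at x)" if "x \<in> S" for x
  proof -
    have "(f has_real_derivative deriv f x) (at x)"
      using Suc.prems(3) that DERIV_deriv_iff_real_differentiable by auto
    then have "(g has_real_derivative deriv f x) (at x)"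
      using has_field_derivative_transform_within_open[OF _ Suc.prems(1) that] Suc.prems(2) by blast
    then show ?thesis using real_differentiable_def by blast
  qed
  have eq: "deriv f x = deriv g x" if "x \<in> S" for x
  proof (rule deriv_cong_ev)
    show "\<forall>\<^sub>F x in nhds x. f x = g x"
      using Suc.prems(1,2) that eventually_nhds by blast
  qed simp
  show ?case
    using diff Suc.IH[OF Suc.prems(1) eq] Suc.prems(3) by simp
qed

lemma Ck_SucD: "Ck (Suc k) f S \<Longrightarrow> Ck k f S"
  by (induction k arbitrary: f)
     (auto intro!: continuous_at_imp_continuous_on differentiable_imp_continuous_within)

lemma Ck_mono: "j \<le> k \<Longrightarrow> Ck k f S \<Longrightarrow> Ck j f S"
proof (induction k rule: dec_induct[of j])
  case (step n) then show ?case using Ck_SucD by blast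
qed auto

lemma Ck_imp_continuous_on: "Ck k f S \<Longrightarrow> continuous_on S f"
  using Ck_mono[of 0 k] by fastforce

lemma Ck_SucI:
  assumes "open S" "\<And>x. x \<in> S \<Longrightarrow> (f has_real_derivative f' x) (at x)" "Ck k f' S"
  shows "Ck (Suc k) f S"
proof -
  have "Ck k (deriv f) S"
    by (rule Ck_cong[OF assms(1) _ assms(3)]) (metis DERIV_imp_deriv assms(2))
  then show ?thesis
    using assms(2) real_differentiable_def by auto
qed

lemma Ck_has_real_derivative:
  "Ck (Suc k) f S \<Longrightarrow> x \<in> S \<Longrightarrow> (f has_real_derivative deriv f x) (at x)"
  using DERIV_deriv_iff_real_differentiable by auto

lemma Ck_const: "Ck k (\<lambda>x. c) S"
  by (induction k arbitrary: c) auto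

lemma Ck_id: "Ck k (\<lambda>x. x) S"
  by (cases k) (auto simp: Ck_const)

lemma Ck_add:
  assumes "open S" "Ck k f S" "Ck k g S" shows "Ck k (\<lambda>x. f x + g x) S"
  using assms(2,3)
proof (induction k arbitrary: f g)
  case 0 then show ?case by (auto intro: continuous_on_add)
next
  case (Suc k)
  have der: "((\<lambda>x. f x + g x) has_real_derivative (deriv f x + deriv g x)) (at x)" if "x \<in> S" for x
    using Suc.prems that by (auto intro!: derivative_intros simp: DERIV_deriv_iff_real_differentiable)
  have "Ck k (\<lambda>x. deriv f x + deriv g x) S" using Suc by simp
  then show ?case using Ck_SucI[OF assms(1) der] by blast
qed

lemma Ck_mult:
  assumes "open S" "Ck k f S" "Ck k g S" shows "Ck k (\<lambda>x. f x * g x) S"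
  using assms(2,3)
proof (induction k arbitrary: f g)
  case 0 then show ?case by (auto intro: continuous_on_mult)
next
  case (Suc k)
  have der: "((\<lambda>x. f x * g x) has_real_derivative (deriv f x * g x + f x * deriv g x)) (at x)"
    if "x \<in> S" for x
    using DERIV_mult'[OF Ck_has_real_derivative Ck_has_real_derivative] Suc.prems that
    by (simp add: algebra_simps)
  have "Ck k (\<lambda>x. deriv f x * g x + f x * deriv g x) S"
    using Ck_add[OF assms(1) Suc.IH Suc.IH] Suc.prems Ck_SucD by auto
  then show ?case using Ck_SucI[OF assms(1) der] by blast
qed

lemma Ck_cmult: "open S \<Longrightarrow> Ck k f S \<Longrightarrow> Ck k (\<lambda>x. c * f x) S"
  using Ck_mult[OF _ Ck_const] by blast

lemma Ck_comp:
  assumes "open S" "open T" "Ck k f T" "Ck k g S" "g ` S \<subseteq> T"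
  shows "Ck k (\<lambda>x. f (g x)) S"
  using assms(3,4,5)
proof (induction k arbitrary: f g)
  case 0
  then show ?case using continuous_on_compose2 by (metis Ck.simps(1))
next
  case (Suc k)
  have der: "((\<lambda>x. f (g x)) has_real_derivative (deriv f (g x) * deriv g x)) (at x)" if "x \<in> S" for x
    using DERIV_chain2[OF Ck_has_real_derivative Ck_has_real_derivative] Suc.prems that by blast
  have "Ck k (\<lambda>x. deriv f (g x) * deriv g x) S"
    using Ck_mult[OF assms(1) Suc.IH] Suc.prems Ck_SucD by auto
  then show ?case using Ck_SucI[OF assms(1) der] by blast
qed

lemma Ck_affine: "open S \<Longrightarrow> Ck k (\<lambda>s. a + b * s) S"
  by (rule Ck_add[OF _ Ck_const Ck_cmult[OF _ Ck_id]])

lemma Ck_subset: "open T \<Longrightarrow> T \<subseteq> S \<Longrightarrow> Ck k f S \<Longrightarrow> Ck k f T"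
  by (induction k arbitrary: f) (auto intro: continuous_on_subset)

lemma Ck_powr: "Ck k (\<lambda>x. c * x powr a) {0<..}"
proof (induction k arbitrary: c a)
  case 0
  show ?case by (auto intro!: continuous_intros)
next
  case (Suc k)
  have "((\<lambda>x. c * x powr a) has_real_derivative (c * a) * x powr (a - 1)) (at x)"
    if "x \<in> {0<..}" for x
    using that by (auto intro!: derivative_eq_intros)
  then show ?case by (rule Ck_SucI[OF _ _ Suc.IH, rotated]) auto
qed

lemma Ck_inverse: "Ck k (\<lambda>x. 1 / x) {0<..}"
  using Ck_cong[OF _ _ Ck_powr[of k 1 "-1"]] by (simp add: powr_minus_divide)

lemma Ck_sqrt: "Ck k sqrt {0<..}"
  using Ck_cong[OF _ _ Ck_powr[of k 1 "1/2"]] by (simp add: powr_half_sqrt)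

lemma Ck_iterated_deriv: "Ck (j + k) f S \<Longrightarrow> Ck k ((deriv ^^ j) f) S"
  by (induction j arbitrary: f) (simp_all add: funpow_Suc_right del: funpow.simps)

lemma Ck_iterated_deriv_differentiable:
  "Ck (Suc k) f S \<Longrightarrow> x \<in> S \<Longrightarrow> ((deriv ^^ k) f) differentiable (at x)"
  using Ck_iterated_deriv[of k 1 f S] by simp

lemma Ck_iterated_deriv_has_real_derivative:
  "Ck (Suc (Suc k)) f S \<Longrightarrow> x \<in> S \<Longrightarrow>
     ((deriv ^^ k) f has_real_derivative (deriv ^^ Suc k) f x) (at x)"
  using Ck_iterated_deriv_differentiable[of "Suc k"] Ck_iterated_deriv[of k "Suc (Suc 0)" f S]
  by (auto simp: DERIV_deriv_iff_real_differentiable)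

section \<open>Integrals depending on a parameter\<close>

lemma continuous_on_section:
  assumes "continuous_on (U \<times> {0..1::real}) (\<lambda>(u,t). D u t)" "u \<in> U"
  shows "continuous_on {0..1} (D u)"
proof -
  have "continuous_on {0..1} (\<lambda>t. (\<lambda>(u,t). D u t) (u, t))"
    by (rule continuous_on_compose2[OF assms(1)]) (use assms(2) in \<open>auto intro!: continuous_intros\<close>)
  then show ?thesis by simp
qed

lemma has_real_derivative_param_integral:
  fixes D :: "nat \<Rightarrow> real \<Rightarrow> real \<Rightarrow> real"
  assumes "open U" "convex U"
    and der: "\<And>j u t. u \<in> U \<Longrightarrow> t \<in> {0..1} \<Longrightarrow>
               ((\<lambda>u. D j u t) has_real_derivative D (Suc j) u t) (at u)"
    and cont: "\<And>j. continuous_on (U \<times> {0..1}) (\<lambda>(u,t). D j u t)"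
    and u: "u \<in> U"
  shows "((\<lambda>u. integral {0..1} (D j u)) has_real_derivative integral {0..1} (D (Suc j) u)) (at u)"
proof -
  have "((\<lambda>u. integral (cbox 0 1) (D j u)) has_field_derivative integral (cbox 0 1) (D (Suc j) u))
          (at u within U)"
  proof (rule leibniz_rule_field_derivative)
    show "\<And>x t. x \<in> U \<Longrightarrow> t \<in> cbox 0 1 \<Longrightarrow>
            ((\<lambda>x. D j x t) has_field_derivative D (Suc j) x t) (at x within U)"
      using der by (auto intro: has_field_derivative_at_within)
    show "\<And>x. x \<in> U \<Longrightarrow> D j x integrable_on cbox 0 1"
      using continuous_on_section[OF cont] by (auto intro!: integrable_continuous_interval)
    show "continuous_on (U \<times> cbox 0 1) (\<lambda>(x, t). D (Suc j) x t)" using cont by simp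
  qed (use u assms(2) in auto)
  then show ?thesis using at_within_open[OF u assms(1)] by simp
qed

lemma Ck_param_integral:
  fixes D :: "nat \<Rightarrow> real \<Rightarrow> real \<Rightarrow> real"
  assumes "open U" "convex U"
    and der: "\<And>j u t. u \<in> U \<Longrightarrow> t \<in> {0..1} \<Longrightarrow>
               ((\<lambda>u. D j u t) has_real_derivative D (Suc j) u t) (at u)"
    and cont: "\<And>j. continuous_on (U \<times> {0..1}) (\<lambda>(u,t). D j u t)"
  shows "Ck k (\<lambda>u. integral {0..1} (D j u)) U"
proof (induction k arbitrary: j)
  case 0
  show ?case
    using has_real_derivative_param_integral[of U D, OF assms]
    by (auto intro!: continuous_at_imp_continuous_on DERIV_isCont)
next
  case (Suc k)
  show ?case
    by (rule Ck_SucI[OF assms(1) has_real_derivative_param_integral[of U D, OF assms] Suc.IH])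
qed

lemma truncation_sequence_at_left:
  fixes a b :: real
  assumes "a < b"
  defines "c \<equiv> \<lambda>k. b - (b - a) / (real k + 2)"
  shows "c k \<in> {a..<b}" "c k \<le> c (Suc k)" "c \<longlonglongrightarrow> b" "filterlim c (at_left b) sequentially"
proof -
  show c: "c k \<in> {a..<b}" for k
    using assms(1) mult_right_mono[of a b "real k"] by (auto simp: c_def field_simps)
  show "c k \<le> c (Suc k)" using assms(1) by (auto simp: c_def field_simps)
  have "(\<lambda>k. (b - a) / real (Suc (Suc k))) \<longlonglongrightarrow> 0"
    by (intro LIMSEQ_Suc lim_const_over_n)
  from tendsto_diff[OF tendsto_const this, of b] show c_tendsto: "c \<longlonglongrightarrow> b"
    by (simp add: c_def add.commute)
  show "filterlim c (at_left b) sequentially"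
    using c by (intro tendsto_imp_filterlim_at_left[OF c_tendsto]) simp
qed

lemma has_integral_nonneg_improper:
  fixes f :: "real \<Rightarrow> real"
  assumes "a < b"
    and nonneg: "\<And>x. x \<in> {a..b} \<Longrightarrow> 0 \<le> f x"
    and int: "\<And>c. c \<in> {a..<b} \<Longrightarrow> f integrable_on {a..c}"
    and lim: "((\<lambda>c. integral {a..c} f) \<longlongrightarrow> I) (at_left b)"
  shows "(f has_integral I) {a..b}"
proof -
  define c where "c = (\<lambda>k. b - (b - a) / (real k + 2))"
  have c: "c k \<in> {a..<b}" "c k \<le> c (Suc k)" "c \<longlonglongrightarrow> b" "filterlim c (at_left b) sequentially" for k
    unfolding c_def using truncation_sequence_at_left[OF assms(1)] by simp_all
  define g where "g k x = (if x \<in> {a..c k} then f x else 0)" for k x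
  \<comment> \<open>\<open>f'\<close> is the pointwise limit of the truncations \<open>g k\<close>; it differs from \<open>f\<close> only at \<open>b\<close>.\<close>
  define f' where "f' x = (if x < b then f x else 0)" for x
  have g_int: "(g k has_integral integral {a..c k} f) {a..b}" for k
  proof -
    have "(f has_integral integral {a..c k} f) (cbox a (c k))"
      using integrable_integral[OF int[OF c(1)]] by simp
    from has_integral_restrict_closed_subinterval[OF this, of a b] show ?thesis
      using c(1)[of k] by (simp add: g_def[abs_def])
  qed
  have g_lim: "(\<lambda>k. integral {a..b} (g k)) \<longlonglongrightarrow> I"
    using filterlim_compose[OF lim c(4)] g_int[THEN integral_unique] by simp
  have "f' integrable_on {a..b} \<and> (\<lambda>k. integral {a..b} (g k)) \<longlonglongrightarrow> integral {a..b} f'"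
  proof (rule monotone_convergence_increasing)
    show "g k integrable_on {a..b}" for k using g_int by blast
    show "g k x \<le> g (Suc k) x" if "x \<in> {a..b}" for k x
      using c(2)[of k] nonneg[OF that] by (auto simp: g_def)
    show "(\<lambda>k. g k x) \<longlonglongrightarrow> f' x" if "x \<in> {a..b}" for x
    proof (cases "x < b")
      case True
      have "\<forall>\<^sub>F k in sequentially. x < c k"
        using order_tendstoD(1)[OF c(3) True] .
      then have "\<forall>\<^sub>F k in sequentially. g k x = f' x"
        by eventually_elim (use that True in \<open>auto simp: g_def f'_def\<close>)
      then show ?thesis by (rule tendsto_eventually)
    next
      case False
      then have "g k x = 0" for k using c(1)[of k] by (auto simp: g_def)
      then show ?thesis using False by (simp add: f'_def)
    qed
    show "bounded (range (\<lambda>k. integral {a..b} (g k)))"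
      using g_lim by (intro Bseq_eq_bounded[THEN iffD1] convergent_imp_Bseq convergentI)
  qed
  with g_lim have "(f' has_integral I) {a..b}"
    using LIMSEQ_unique has_integral_integral by metis
  then show ?thesis
    by (rule has_integral_spike[OF negligible_sing[of b], rotated]) (auto simp: f'_def)
qed

lemma has_integral_substitution_one_minus_square:
  fixes f :: "real \<Rightarrow> real"
  assumes b: "0 \<le> b" "b < 1" and f: "continuous_on {0..b} f"
  shows "((\<lambda>x. 2 * x * f (1 - x\<^sup>2)) has_integral integral {0..b} f) {sqrt (1 - b)..1}"
proof -
  define a where "a = sqrt (1 - b)"
  have a: "0 < a" "a \<le> 1" "1 - a\<^sup>2 = b" using b by (auto simp: a_def)
  have "((\<lambda>x. (- 2 * x) *\<^sub>R f (1 - x\<^sup>2)) has_integral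
          integral {1 - a\<^sup>2..1 - 1\<^sup>2} f - integral {1 - 1\<^sup>2..1 - a\<^sup>2} f) {a..1}"
  proof (rule has_integral_substitution_general[of "{}" a 1 "\<lambda>x. 1 - x\<^sup>2" 0 b])
    show "(\<lambda>x. 1 - x\<^sup>2) ` {a..1} \<subseteq> {0..b}"
    proof (rule image_subsetI)
      fix x assume x: "x \<in> {a..1}"
      have "a\<^sup>2 \<le> x\<^sup>2" "x\<^sup>2 \<le> 1" using x a by (auto intro: power_mono simp: power_le_one)
      then show "1 - x\<^sup>2 \<in> {0..b}" using a by auto
    qed
    show "((\<lambda>x. 1 - x\<^sup>2) has_real_derivative - 2 * x) (at x within {a..1})" for x
      by (auto intro!: derivative_eq_intros)
    show "continuous_on {a..1} (\<lambda>x. 1 - x\<^sup>2)"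
      by (intro continuous_intros)
  qed (use a f in auto)
  moreover have "integral {b..0} f = 0"
    using b by (cases "b = 0") (auto simp: integral_empty)
  ultimately show ?thesis
    using a(3) by (simp add: a_def has_integral_neg_iff)
qed

section \<open>Expansions of \<open>(x\<^sub>0 - s)\<^bsup>E\<^esup> W(s)\<close> as \<open>s \<rightarrow> x\<^sub>0\<^sup>-\<close>\<close>

lemma Ck1_eventually_Lipschitz_at_left:
  assumes "r > 0" "Ck 1 W (ball x0 r)"
  obtains L where "\<forall>\<^sub>F s in at_left x0. \<bar>W s - W x0\<bar> \<le> L * (x0 - s)"
proof -
  define S where "S = {x0 - r / 2..x0}"
  have SB: "S \<subseteq> ball x0 r" using assms(1) by (auto simp: S_def dist_real_def)
  have "continuous_on S (deriv W)"
    using Ck_imp_continuous_on[of 0 "deriv W"] assms(2) continuous_on_subset[OF _ SB] by auto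
  then have "bounded (deriv W ` S)"
    using compact_imp_bounded compact_continuous_image unfolding S_def by blast
  then obtain L where L: "\<And>x. x \<in> S \<Longrightarrow> \<bar>deriv W x\<bar> \<le> L"
    unfolding bounded_iff by auto
  have Lip: "\<bar>W s - W x0\<bar> \<le> L * (x0 - s)" if s: "s \<in> S" for s
  proof -
    have "norm (W s - W x0) \<le> L * norm (s - x0)"
    proof (rule field_differentiable_bound[of S W "deriv W" L])
      show "(W has_field_derivative deriv W z) (at z within S)" if "z \<in> S" for z
        using Ck_has_real_derivative[of 0 W] assms(2) SB that
        by (auto intro: has_field_derivative_at_within)
    qed (use s L assms(1) in \<open>auto simp: S_def\<close>)
    then show ?thesis using s by (simp add: S_def)
  qed
  have "\<forall>\<^sub>F s in at_left x0. s \<in> {x0 - r / 2<..<x0}"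
    using eventually_at_left_real assms(1) by simp
  then have "\<forall>\<^sub>F s in at_left x0. \<bar>W s - W x0\<bar> \<le> L * (x0 - s)"
    by eventually_elim (simp add: Lip S_def)
  then show ?thesis by (rule that)
qed

lemma bigo_power_times_Ck1:
  assumes "r > 0" "Ck 1 W (ball x0 r)"
    and f: "\<And>s. s \<in> {x0 - r<..<x0} \<Longrightarrow> f s = (x0 - s) powr E * W s"
  shows "(\<lambda>s. f s - W x0 * (x0 - s) powr E) \<in> O[at_left x0](\<lambda>s. (x0 - s) powr (E + 1))"
proof -
  obtain L where L: "\<forall>\<^sub>F s in at_left x0. \<bar>W s - W x0\<bar> \<le> L * (x0 - s)"
    using Ck1_eventually_Lipschitz_at_left[OF assms(1,2)] .
  have "\<forall>\<^sub>F s in at_left x0. s \<in> {x0 - r<..<x0}"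
    using eventually_at_left_real[of "x0 - r" x0] assms(1) by simp
  with L have "\<forall>\<^sub>F s in at_left x0.
      norm (f s - W x0 * (x0 - s) powr E) \<le> L * norm ((x0 - s) powr (E + 1))"
  proof eventually_elim
    case (elim s)
    have "f s - W x0 * (x0 - s) powr E = (x0 - s) powr E * (W s - W x0)"
      using f[OF elim(2)] by (simp add: algebra_simps)
    then have "norm (f s - W x0 * (x0 - s) powr E) = (x0 - s) powr E * \<bar>W s - W x0\<bar>"
      by (simp add: abs_mult)
    also have "\<dots> \<le> (x0 - s) powr E * (L * (x0 - s))"
      using elim by (intro mult_left_mono) auto
    also have "\<dots> = L * (x0 - s) powr (E + 1)"
      using elim(2) by (simp add: powr_add)
    finally show ?case by simp
  qed
  then show ?thesis by (rule bigoI)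
qed

lemma deriv_power_times:
  assumes W: "Ck (Suc k) W (ball x0 r)"
    and f: "\<And>s. s \<in> {x0 - r<..<x0} \<Longrightarrow> f s = (x0 - s) powr E * W s"
    and s: "s \<in> {x0 - r<..<x0}"
  shows "deriv f s = (x0 - s) powr (E - 1) * (- E * W s + (x0 - s) * deriv W s)"
proof -
  have "(W has_real_derivative deriv W s) (at s)"
    using s Ck_has_real_derivative[OF W] by (simp add: dist_real_def)
  then have "((\<lambda>s. (x0 - s) powr E * W s) has_real_derivative
      - E * (x0 - s) powr (E - 1) * W s + (x0 - s) powr E * deriv W s) (at s)"
    using s by (auto intro!: derivative_eq_intros)
  then have "(f has_real_derivative
      - E * (x0 - s) powr (E - 1) * W s + (x0 - s) powr E * deriv W s) (at s)"
    by (rule has_field_derivative_transform_within_open[OF _ _ s]) (auto simp: f)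
  moreover have "(x0 - s) powr E = (x0 - s) powr (E - 1) * (x0 - s)"
    using s powr_add[of "x0 - s" "E - 1" 1] by simp
  ultimately show ?thesis by (simp add: DERIV_imp_deriv algebra_simps)
qed

lemma Ck_power_deriv_factor:
  assumes "Ck (Suc k) W (ball x0 r)"
  shows "Ck k (\<lambda>s. - E * W s + (x0 - s) * deriv W s) (ball x0 r)"
proof -
  have "Ck k (\<lambda>s. x0 + (-1) * s) (ball x0 r)"
    by (rule Ck_affine) simp
  then have "Ck k (\<lambda>s. x0 - s) (ball x0 r)"
    by (rule Ck_cong[rotated 2]) auto
  then have "Ck k (\<lambda>s. (x0 - s) * deriv W s) (ball x0 r)"
    using assms by (intro Ck_mult) auto
  moreover have "Ck k (\<lambda>s. - E * W s) (ball x0 r)"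
    using Ck_SucD[OF assms] by (intro Ck_cmult) auto
  ultimately show ?thesis
    by (intro Ck_add[of _ k "\<lambda>s. - E * W s"]) auto
qed

lemma power_times_Ck3_expansions:
  assumes r: "r > 0" and W: "Ck 3 W (ball x0 r)"
    and f: "\<And>s. s \<in> {x0 - r<..<x0} \<Longrightarrow> f s = (x0 - s) powr E * W s"
  shows "(\<lambda>s. f s - W x0 * (x0 - s) powr E) \<in> O[at_left x0](\<lambda>s. (x0 - s) powr (E + 1))"
    and "(\<lambda>s. deriv f s - (- E * W x0) * (x0 - s) powr (E - 1))
           \<in> O[at_left x0](\<lambda>s. (x0 - s) powr (E - 1 + 1))"
    and "(\<lambda>s. deriv (deriv f) s - (E * (E - 1) * W x0) * (x0 - s) powr (E - 1 - 1))
           \<in> O[at_left x0](\<lambda>s. (x0 - s) powr (E - 1 - 1 + 1))"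
proof -
  define W1 where "W1 s = - E * W s + (x0 - s) * deriv W s" for s
  define W2 where "W2 s = - (E - 1) * W1 s + (x0 - s) * deriv W1 s" for s
  have W1: "Ck 2 W1 (ball x0 r)"
    unfolding W1_def[abs_def] using Ck_power_deriv_factor[of 2 W x0 r E] W by (simp add: numeral_eq_Suc)
  have W2: "Ck 1 W2 (ball x0 r)"
    unfolding W2_def[abs_def] using Ck_power_deriv_factor[of 1 W1 x0 r "E - 1"] W1
    by (simp add: numeral_eq_Suc)
  have f1: "deriv f s = (x0 - s) powr (E - 1) * W1 s" if "s \<in> {x0 - r<..<x0}" for s
    using deriv_power_times[OF _ f that, of 2] W by (simp add: W1_def numeral_eq_Suc)
  have f2: "deriv (deriv f) s = (x0 - s) powr (E - 1 - 1) * W2 s" if "s \<in> {x0 - r<..<x0}" for s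
    using deriv_power_times[OF W1[unfolded numeral_eq_Suc] f1 that] by (simp add: W2_def)
  show "(\<lambda>s. f s - W x0 * (x0 - s) powr E) \<in> O[at_left x0](\<lambda>s. (x0 - s) powr (E + 1))"
    using bigo_power_times_Ck1[OF r Ck_mono[OF _ W] f] by simp
  show "(\<lambda>s. deriv f s - (- E * W x0) * (x0 - s) powr (E - 1))
          \<in> O[at_left x0](\<lambda>s. (x0 - s) powr (E - 1 + 1))"
    using bigo_power_times_Ck1[OF r Ck_mono[OF _ W1] f1] by (simp add: W1_def)
  show "(\<lambda>s. deriv (deriv f) s - (E * (E - 1) * W x0) * (x0 - s) powr (E - 1 - 1))
          \<in> O[at_left x0](\<lambda>s. (x0 - s) powr (E - 1 - 1 + 1))"
    using bigo_power_times_Ck1[OF r W2 f2] by (simp add: W1_def W2_def algebra_simps)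
qed

section \<open>The period map\<close>

locale superlinear_power =
  fixes p :: real
  assumes p_gt_1: "p > 1"
begin

text \<open>With \<open>z = 1 - t\<^sup>2\<close> one has \<open>1 - z\<^sup>2 = t\<^sup>2 Acoef t\<close> and \<open>1 - z\<^bsup>p+1\<^esup> = t\<^sup>2 Bcoef t\<close>.\<close>

definition Acoef :: "real \<Rightarrow> real" where
  "Acoef t = 2 - t\<^sup>2"

definition Bcoef :: "real \<Rightarrow> real" where
  "Bcoef t = (if t = 0 then p + 1 else (1 - (1 - t\<^sup>2) powr (p + 1)) / t\<^sup>2)"

lemma Bcoef_tendsto_0: "(Bcoef \<longlongrightarrow> p + 1) (at 0 within {0..1})"
proof -
  have "((\<lambda>y. y powr (p + 1)) has_real_derivative (p + 1) * 1 powr (p + 1 - 1)) (at 1)"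
    by (rule has_real_derivative_powr) simp
  then have "((\<lambda>y. (y powr (p + 1) - 1 powr (p + 1)) / (y - 1)) \<longlongrightarrow> p + 1) (at 1)"
    unfolding has_field_derivative_iff by simp
  moreover have "filterlim (\<lambda>t. 1 - t\<^sup>2) (at 1) (at 0 within {0..1::real})"
  proof (rule filterlim_atI)
    show "((\<lambda>t. 1 - t\<^sup>2) \<longlongrightarrow> 1) (at 0 within {0..1::real})"
      by (auto intro!: tendsto_eq_intros)
    show "\<forall>\<^sub>F t in at 0 within {0..1::real}. 1 - t\<^sup>2 \<noteq> 1"
      by (auto simp: eventually_at_filter)
  qed
  ultimately have "((\<lambda>t. ((1 - t\<^sup>2) powr (p + 1) - 1 powr (p + 1)) / ((1 - t\<^sup>2) - 1)) \<longlongrightarrow> p + 1)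
                     (at 0 within {0..1})"
    by (rule filterlim_compose)
  then show ?thesis
  proof (rule tendsto_cong[THEN iffD1, rotated])
    show "\<forall>\<^sub>F t in at 0 within {0..1}.
            ((1 - t\<^sup>2) powr (p + 1) - 1 powr (p + 1)) / (1 - t\<^sup>2 - 1) = Bcoef t"
      by (auto simp: eventually_at_filter Bcoef_def field_simps)
  qed
qed

lemma Bcoef_continuous_on: "continuous_on {0..1} Bcoef"
  unfolding continuous_on_def
proof
  fix x :: real assume x: "x \<in> {0..1}"
  show "(Bcoef \<longlongrightarrow> Bcoef x) (at x within {0..1})"
  proof (cases "x = 0")
    case True
    then show ?thesis using Bcoef_tendsto_0 by (simp add: Bcoef_def)
  next
    case False
    then have x0: "x \<in> {0<..1}" using x by auto
    have c: "continuous_on {0<..1} (\<lambda>t::real. (1 - t\<^sup>2) powr (p + 1))"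
      by (rule continuous_on_powr')
         (use p_gt_1 in \<open>auto intro!: continuous_intros simp: power_le_one\<close>)
    have "continuous_on {0<..1} (\<lambda>t. (1 - (1 - t\<^sup>2) powr (p + 1)) / t\<^sup>2)"
      by (intro continuous_intros c) auto
    then have "continuous_on {0<..1} Bcoef"
      by (rule continuous_on_eq) (auto simp: Bcoef_def)
    moreover have "at x within {0..1} = at x within {0<..1}"
      by (rule at_within_nhd[of _ "{0<..}"]) (use x0 in auto)
    ultimately show ?thesis
      using x0 unfolding continuous_on_def by simp
  qed
qed

lemma Bcoef_bounds:
  assumes "t \<in> {0..1}"
  shows "1 \<le> Bcoef t" "Bcoef t \<le> p + 1"
proof -
  define x where "x = 1 - t\<^sup>2"
  have x: "0 \<le> x" "x \<le> 1" using assms by (auto simp: x_def power_le_one)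
  have "x powr (p + 1) \<le> x powr 1"
    using x p_gt_1 by (intro powr_mono') auto
  then have lower: "t\<^sup>2 \<le> 1 - (1 - t\<^sup>2) powr (p + 1)"
    using x by (simp add: x_def)
  have "(p + 1) * (x - 1) \<le> x powr (p + 1) - 1 powr (p + 1)"
  proof (cases "x = 0")
    case True then show ?thesis using p_gt_1 by simp
  next
    case False
    have conv: "convex_on {0<..} (\<lambda>y::real. y powr (p + 1))"
      by (rule powr_convex) (use p_gt_1 in simp)
    have "((\<lambda>y. y powr (p + 1)) has_real_derivative (p + 1)) (at 1 within {0<..})"
      using has_real_derivative_powr[of 1 "p + 1"] by (simp add: has_field_derivative_at_within)
    from convex_on_imp_above_tangent[OF conv _ _ _ this, of x] show ?thesis
      using x False by (simp add: interior_open)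
  qed
  then have upper: "1 - (1 - t\<^sup>2) powr (p + 1) \<le> (p + 1) * t\<^sup>2"
    by (simp add: x_def algebra_simps)
  show "1 \<le> Bcoef t"
    using lower p_gt_1 by (cases "t = 0") (simp_all add: Bcoef_def le_divide_eq)
  show "Bcoef t \<le> p + 1"
    using upper p_gt_1 by (cases "t = 0") (simp_all add: Bcoef_def divide_le_eq)
qed

definition Udom :: "real set" where
  "Udom = {- 1 / (2 * (p + 1))<..}"

lemma open_Udom: "open Udom" and convex_Udom: "convex Udom"
  by (simp_all add: Udom_def)

lemma nonneg_in_Udom:
  assumes "u \<ge> 0"
  shows "u \<in> Udom"
proof -
  have "- 1 / (2 * (p + 1)) < 0" using p_gt_1 by simp
  then show ?thesis using assms unfolding Udom_def greaterThan_iff by linarith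
qed

lemma Udom_gt_minus_1:
  assumes "u \<in> Udom"
  shows "u > -1"
proof -
  have "- 1 / (2 * (p + 1)) > -1" using p_gt_1 by (simp add: field_simps)
  then show ?thesis using assms by (simp add: Udom_def)
qed

lemma Acoef_Bcoef_ge:
  assumes "u \<in> Udom" "t \<in> {0..1}"
  shows "Acoef t + u * Bcoef t \<ge> 1/2"
proof -
  have A: "1 \<le> Acoef t" using assms(2) by (auto simp: Acoef_def power_le_one)
  show ?thesis
  proof (cases "u \<ge> 0")
    case True
    then have "0 \<le> u * Bcoef t" using Bcoef_bounds[OF assms(2)] by simp
    then show ?thesis using A by linarith
  next
    case False
    have "u * (p + 1) \<le> u * Bcoef t"
      using False Bcoef_bounds[OF assms(2)] by (simp add: mult_left_mono_neg)
    moreover have "- 1/2 < u * (p + 1)"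
      using assms(1) p_gt_1 by (simp add: Udom_def field_simps)
    ultimately show ?thesis using A by linarith
  qed
qed

text \<open>\<open>Dint j u t\<close> is the \<open>j\<close>-th derivative in \<open>u\<close> of \<open>(Acoef t + u Bcoef t) powr (-1/2)\<close>.\<close>

definition dcoef :: "nat \<Rightarrow> real" where
  "dcoef j = (\<Prod>i<j. - 1/2 - real i)"

definition Dint :: "nat \<Rightarrow> real \<Rightarrow> real \<Rightarrow> real" where
  "Dint j u t = dcoef j * Bcoef t ^ j * (Acoef t + u * Bcoef t) powr (- 1/2 - real j)"

lemma Dint_0: "Dint 0 u t = (Acoef t + u * Bcoef t) powr (- 1/2)"
  by (simp add: Dint_def dcoef_def)

lemma has_real_derivative_Dint:
  assumes "u \<in> Udom" "t \<in> {0..1}"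
  shows "((\<lambda>u. Dint j u t) has_real_derivative Dint (Suc j) u t) (at u)"
proof -
  have "Acoef t + u * Bcoef t > 0" using Acoef_Bcoef_ge[OF assms] by simp
  then have "((\<lambda>u. Dint j u t) has_real_derivative
      dcoef j * Bcoef t ^ j * ((- 1/2 - real j) * (Acoef t + u * Bcoef t) powr (- 1/2 - real j - 1)
        * Bcoef t)) (at u)"
    unfolding Dint_def by (auto intro!: derivative_eq_intros)
  then show ?thesis by (simp add: Dint_def dcoef_def algebra_simps)
qed

lemma continuous_on_Dint: "continuous_on (Udom \<times> {0..1}) (\<lambda>(u,t). Dint j u t)"
proof -
  have B: "continuous_on (Udom \<times> {0..1}) (\<lambda>x. Bcoef (snd x))"
    by (rule continuous_on_compose2[OF Bcoef_continuous_on continuous_on_snd]) auto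
  have "\<forall>x\<in>Udom \<times> {0..1}. Acoef (snd x) + fst x * Bcoef (snd x) \<noteq> 0"
    using Acoef_Bcoef_ge by fastforce
  then have "continuous_on (Udom \<times> {0..1})
      (\<lambda>x. dcoef j * Bcoef (snd x) ^ j * (Acoef (snd x) + fst x * Bcoef (snd x)) powr (- 1/2 - real j))"
    unfolding Acoef_def by (intro continuous_intros B)
  then show ?thesis by (simp add: Dint_def Acoef_def case_prod_beta')
qed

lemma integrable_Dint: "u \<in> Udom \<Longrightarrow> Dint j u integrable_on {0..1}"
  using continuous_on_section[OF continuous_on_Dint] by (auto intro!: integrable_continuous_interval)

text \<open>The period as a function of \<open>u = 2/(p+1) N\<^bsup>p-1\<^esup>\<close>, after the substitution \<open>z = 1 - t\<^sup>2\<close>.\<close>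

definition period :: "real \<Rightarrow> real" where
  "period u = 8 * integral {0..1} (Dint 0 u)"

lemma Ck_period: "Ck k period Udom"
  unfolding period_def[abs_def]
  by (intro Ck_cmult open_Udom Ck_param_integral convex_Udom has_real_derivative_Dint continuous_on_Dint)

lemma has_real_derivative_period:
  "u \<in> Udom \<Longrightarrow> (period has_real_derivative 8 * integral {0..1} (Dint 1 u)) (at u)"
  unfolding period_def[abs_def]
  using has_real_derivative_param_integral[of Udom Dint, OF open_Udom convex_Udom
          has_real_derivative_Dint continuous_on_Dint]
  by (auto intro!: DERIV_cmult)

lemma integral_Dint_1_neg:
  assumes "u \<in> Udom"
  shows "integral {0..1} (Dint 1 u) < 0"
proof -
  have c: "continuous_on {0..1} (Dint 1 u)"
    using continuous_on_section[OF continuous_on_Dint assms] .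
  obtain x where x: "x \<in> {0..1}" "\<forall>y\<in>{0..1}. Dint 1 u y \<le> Dint 1 u x"
    using continuous_attains_sup[OF _ _ c] by auto
  have "Dint 1 u x < 0"
    using Acoef_Bcoef_ge[OF assms x(1)] Bcoef_bounds(1)[OF x(1)]
    by (simp add: Dint_def dcoef_def mult_neg_pos)
  moreover have "integral {0..1} (Dint 1 u) \<le> integral {0..1} (\<lambda>_::real. Dint 1 u x)"
    using x by (intro integral_le integrable_Dint assms) auto
  ultimately show ?thesis by simp
qed

lemma deriv_period_neg: "u \<in> Udom \<Longrightarrow> deriv period u < 0"
  using has_real_derivative_period integral_Dint_1_neg DERIV_imp_deriv by fastforce

lemma has_integral_Acoef_powr: "((\<lambda>t. Acoef t powr (- 1/2)) has_integral pi / 4) {0..1}"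
proof -
  define f where "f t = arcsin (t / sqrt 2)" for t :: real
  have "(f has_real_derivative Acoef t powr (- 1/2)) (at t within {0..1})"
    if t: "t \<in> {0..1}" for t
  proof -
    have "1 < sqrt (2::real)" by simp
    moreover have "0 \<le> t" "t \<le> 1" using t by auto
    ultimately have "t < sqrt 2" "- sqrt 2 < t" by linarith+
    then have "- 1 < t / sqrt 2" "t / sqrt 2 < 1" by (auto simp: field_simps)
    then have "(f has_real_derivative inverse (sqrt (1 - (t / sqrt 2)\<^sup>2)) * (1 / sqrt 2)) (at t)"
      unfolding f_def[abs_def]
      by (intro DERIV_chain2[of arcsin _ "\<lambda>t. t / sqrt 2", OF DERIV_arcsin])
         (auto intro!: derivative_eq_intros simp: real_div_sqrt)
    moreover have "sqrt (1 - (t / sqrt 2)\<^sup>2) * sqrt 2 = sqrt (Acoef t)"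
      by (simp add: real_sqrt_mult[symmetric] power_divide Acoef_def algebra_simps)
    moreover have "t\<^sup>2 \<le> 1" using t by (simp add: power_le_one)
    then have "Acoef t > 0" by (simp add: Acoef_def)
    ultimately show ?thesis
      by (auto intro: has_field_derivative_at_within
               simp: powr_minus_divide powr_half_sqrt[symmetric] field_simps)
  qed
  then have "((\<lambda>t. Acoef t powr (- 1/2)) has_integral f 1 - f 0) {0..1}"
    by (intro fundamental_theorem_of_calculus)
       (auto simp: has_real_derivative_iff_has_vector_derivative[symmetric])
  moreover have "1 / sqrt 2 = sin (pi / 4)" by (simp add: sin_45 real_div_sqrt)
  then have "f 1 = pi / 4"
    unfolding f_def using arcsin_sin[of "pi / 4"] pi_gt_zero by simp
  moreover have "f 0 = 0" by (simp add: f_def)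
  ultimately show ?thesis by simp
qed

lemma period_0: "period 0 = 2 * pi"
  using integral_unique[OF has_integral_Acoef_powr] by (simp add: period_def Dint_0[abs_def])

lemma period_strict_decreasing:
  assumes "u \<in> Udom" "v \<in> Udom" "u < v"
  shows "period v < period u"
proof (rule DERIV_neg_imp_decreasing[OF assms(3)])
  fix x assume "u \<le> x" "x \<le> v"
  then have "x \<in> Udom" using assms by (auto simp: Udom_def)
  then show "\<exists>y. (period has_real_derivative y) (at x) \<and> y < 0"
    using has_real_derivative_period integral_Dint_1_neg by fastforce
qed

lemma inj_on_period: "inj_on period Udom"
  by (rule inj_onI) (metis linorder_neqE_linordered_idom period_strict_decreasing order_less_irrefl)

lemma period_le_8_div_sqrt:
  assumes "u > 0"
  shows "period u \<le> 8 / sqrt u"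
proof -
  have "integral {0..1} (Dint 0 u) \<le> integral {0..1} (\<lambda>_::real. 1 / sqrt u)"
  proof (rule integral_le[OF integrable_Dint integrable_const_ivl])
    fix t :: real assume t: "t \<in> {0..1}"
    have "u * 1 \<le> u * Bcoef t"
      using Bcoef_bounds(1)[OF t] assms by (intro mult_left_mono) auto
    moreover have "t\<^sup>2 \<le> 1" using t by (simp add: power_le_one)
    ultimately have "u \<le> Acoef t + u * Bcoef t" by (simp add: Acoef_def)
    then have "(Acoef t + u * Bcoef t) powr (- 1/2) \<le> u powr (- 1/2)"
      using assms by (intro powr_mono2') auto
    then show "Dint 0 u t \<le> 1 / sqrt u"
      using assms by (simp add: Dint_0 powr_minus_divide powr_half_sqrt[symmetric])
  qed (use assms nonneg_in_Udom in auto)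
  then show ?thesis by (simp add: period_def)
qed

lemma period_image: "period ` {0..} = {0<..2*pi}"
proof
  show "period ` {0..} \<subseteq> {0<..2*pi}"
  proof (rule image_subsetI)
    fix u :: real assume u: "u \<in> {0..}"
    have "period (u + 1) < period u"
      using u nonneg_in_Udom by (intro period_strict_decreasing) auto
    moreover have "period u \<le> period 0"
      using u period_strict_decreasing[of 0 u] nonneg_in_Udom by (cases "u = 0") auto
    moreover have "period (u + 1) \<ge> 0"
      using u unfolding period_def by (auto intro!: integral_nonneg integrable_Dint nonneg_in_Udom
                                           simp: Dint_0)
    ultimately show "period u \<in> {0<..2*pi}" using period_0 by simp
  qed
next
  show "{0<..2*pi} \<subseteq> period ` {0..}"
  proof
    fix s assume s: "s \<in> {0<..2*pi}"
    define u0 where "u0 = 256 / s\<^sup>2"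
    have u0: "u0 > 0" using s by (simp add: u0_def)
    have "sqrt u0 = 16 / s" using s by (simp add: u0_def real_sqrt_divide)
    then have "period u0 \<le> s" using period_le_8_div_sqrt[OF u0] s by simp
    moreover have "s \<le> period 0" using s period_0 by simp
    moreover have "continuous_on {0..u0} period"
      using Ck_imp_continuous_on[OF Ck_period[of 0]] nonneg_in_Udom
      by (auto intro: continuous_on_subset)
    ultimately obtain x where "0 \<le> x" "x \<le> u0" "period x = s"
      using IVT2'[of period u0 s 0] u0 by auto
    then show "s \<in> period ` {0..}" by auto
  qed
qed

definition period_integrand :: "real \<Rightarrow> real \<Rightarrow> real" where
  "period_integrand u z = (1 - z\<^sup>2 + u * (1 - z powr (p + 1))) powr (- 1/2)"

lemma continuous_on_period_integrand:
  assumes "u \<ge> 0" "b < 1"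
  shows "continuous_on {0..b} (period_integrand u)"
proof -
  have c: "continuous_on {0..b} (\<lambda>z::real. z powr (p + 1))"
    by (rule continuous_on_powr') (use p_gt_1 in \<open>auto intro!: continuous_intros\<close>)
  have "1 - z\<^sup>2 + u * (1 - z powr (p + 1)) \<noteq> 0" if z: "z \<in> {0..b}" for z
  proof -
    have "z\<^sup>2 < 1" using z assms by (simp add: power_less_one_iff abs_less_iff)
    moreover have "z powr (p + 1) \<le> 1" using z assms p_gt_1 by (intro powr_le1) auto
    then have "u * (1 - z powr (p + 1)) \<ge> 0" using assms by simp
    ultimately show ?thesis by linarith
  qed
  then show ?thesis unfolding period_integrand_def[abs_def]
    by (intro continuous_intros c) auto
qed

lemma period_integrand_subst:
  assumes "u \<ge> 0" "x \<in> {0<..1}"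
  shows "2 * x * period_integrand u (1 - x\<^sup>2) = 2 * Dint 0 u x"
proof -
  have x: "x > 0" "x \<in> {0..1}" using assms by auto
  have pos: "Acoef x + u * Bcoef x > 0"
    using Acoef_Bcoef_ge[OF nonneg_in_Udom[OF assms(1)] x(2)] by simp
  have "1 - (1 - x\<^sup>2)\<^sup>2 + u * (1 - (1 - x\<^sup>2) powr (p + 1)) = x\<^sup>2 * (Acoef x + u * Bcoef x)"
    using x by (simp add: Acoef_def Bcoef_def power2_eq_square field_simps)
  then have "period_integrand u (1 - x\<^sup>2) = (x\<^sup>2) powr (- 1/2) * (Acoef x + u * Bcoef x) powr (- 1/2)"
    using pos by (simp add: period_integrand_def powr_mult)
  moreover have "(x\<^sup>2) powr (- 1/2) = 1 / x"
    using x by (simp add: powr_minus_divide powr_half_sqrt[symmetric])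
  ultimately show ?thesis using x by (simp add: Dint_0)
qed

lemma has_integral_period_integrand_truncated:
  assumes u: "u \<ge> 0" and b: "0 \<le> b" "b < 1"
  shows "(period_integrand u has_integral integral {sqrt (1 - b)..1} (\<lambda>t. 2 * Dint 0 u t)) {0..b}"
proof -
  have cont: "continuous_on {0..b} (period_integrand u)"
    by (rule continuous_on_period_integrand[OF u b(2)])
  have "((\<lambda>x. 2 * x * period_integrand u (1 - x\<^sup>2)) has_integral integral {0..b} (period_integrand u))
          {sqrt (1 - b)..1}"
    by (rule has_integral_substitution_one_minus_square[OF b cont])
  moreover have "2 * x * period_integrand u (1 - x\<^sup>2) = 2 * Dint 0 u x" if "x \<in> {sqrt (1 - b)..1}" for x
  proof -
    have "0 < sqrt (1 - b)" using b by simp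
    moreover have "sqrt (1 - b) \<le> x" "x \<le> 1" using that by auto
    ultimately have "x \<in> {0<..1}" by (metis greaterThanAtMost_iff order_less_le_trans)
    then show ?thesis using period_integrand_subst[OF u] by blast
  qed
  ultimately have "((\<lambda>t. 2 * Dint 0 u t) has_integral integral {0..b} (period_integrand u))
                     {sqrt (1 - b)..1}"
    by (subst (asm) has_integral_cong) auto
  then have "integral {sqrt (1 - b)..1} (\<lambda>t. 2 * Dint 0 u t) = integral {0..b} (period_integrand u)"
    by (rule integral_unique)
  then show ?thesis
    using integrable_integral[OF integrable_continuous_interval[OF cont]] by simp
qed

lemma has_integral_period_integrand:
  assumes u: "u \<ge> 0"
  shows "(period_integrand u has_integral period u / 4) {0..1}"
proof -
  define K where "K t = 2 * Dint 0 u t" for t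
  have K: "K integrable_on {0..1}"
    unfolding K_def using integrable_Dint[OF nonneg_in_Udom[OF u]] by (rule integrable_on_mult_right)
  have ev: "\<forall>\<^sub>F c in at_left 1. c \<in> {0<..<1::real}"
    using eventually_at_left_real by simp
  have lim: "((\<lambda>c. integral {sqrt (1 - c)..1} K) \<longlongrightarrow> integral {sqrt (1 - 1)..1} K) (at_left 1)"
  proof (rule continuous_on_tendsto_compose[OF indefinite_integral_continuous_1'[OF K]])
    show "((\<lambda>c. sqrt (1 - c)) \<longlongrightarrow> sqrt (1 - 1)) (at_left (1::real))"
      by (intro tendsto_intros)
    show "\<forall>\<^sub>F c in at_left 1. sqrt (1 - c) \<in> {0..1::real}"
      using ev by eventually_elim auto
  qed simp
  have "\<forall>\<^sub>F c in at_left 1. integral {sqrt (1 - c)..1} K = integral {0..c} (period_integrand u)"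
    using ev
  proof eventually_elim
    case (elim c)
    then show ?case
      using integral_unique[OF has_integral_period_integrand_truncated[OF u, of c]]
      by (simp add: K_def[abs_def])
  qed
  from tendsto_cong[THEN iffD1, OF this lim]
  have "((\<lambda>c. integral {0..c} (period_integrand u)) \<longlongrightarrow> integral {0..1} K) (at_left 1)"
    by simp
  then have "(period_integrand u has_integral integral {0..1} K) {0..1}"
  proof (rule has_integral_nonneg_improper[rotated 3])
    show "0 \<le> period_integrand u x" for x by (simp add: period_integrand_def)
    show "period_integrand u integrable_on {0..c}" if "c \<in> {0..<1}" for c
      using has_integral_period_integrand_truncated[OF u] that by auto
  qed simp
  moreover have "integral {0..1} K = 2 * integral {0..1} (Dint 0 u)"
    unfolding K_def[abs_def] by (rule integral_mult_right)
  then have "integral {0..1} K = period u / 4"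
    by (simp add: period_def)
  ultimately show ?thesis by simp
qed

text \<open>The energy of the solution with amplitude \<open>N\<close> is \<open>N\<^sup>2 + 2/(p+1) N\<^bsup>p+1\<^esup>\<close>; in the parameter
  \<open>u = 2/(p+1) N\<^bsup>p-1\<^esup>\<close> this energy is \<open>level u\<close>.\<close>

definition energy :: "real \<Rightarrow> real" where
  "energy n = n\<^sup>2 + 2 / (p + 1) * n powr (p + 1)"

definition amplitude :: "real \<Rightarrow> real" where
  "amplitude u = ((p + 1) / 2 * u) powr (1 / (p - 1))"

definition level :: "real \<Rightarrow> real" where
  "level u = (amplitude u)\<^sup>2 * (1 + u)"

lemma energy_strict_mono:
  assumes "0 \<le> n" "n < m"
  shows "energy n < energy m"
proof -
  have "n\<^sup>2 < m\<^sup>2" using assms by (intro power_strict_mono) auto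
  moreover have "n powr (p + 1) < m powr (p + 1)" using assms p_gt_1 by (intro powr_less_mono2) auto
  then have "2 / (p + 1) * n powr (p + 1) < 2 / (p + 1) * m powr (p + 1)"
    using p_gt_1 by (intro mult_strict_left_mono) auto
  ultimately show ?thesis by (simp add: energy_def)
qed

lemma amplitude_nonneg: "amplitude u \<ge> 0"
  by (simp add: amplitude_def)

lemma amplitude_powr: "u \<ge> 0 \<Longrightarrow> amplitude u powr (p - 1) = (p + 1) / 2 * u"
  using p_gt_1 by (simp add: amplitude_def powr_powr)

lemma energy_amplitude:
  assumes "u \<ge> 0"
  shows "energy (amplitude u) = level u"
proof (cases "u = 0")
  case True
  then show ?thesis using p_gt_1 by (simp add: energy_def level_def amplitude_def)
next
  case False
  then have pos: "amplitude u > 0" using assms p_gt_1 by (simp add: amplitude_def)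
  have "amplitude u powr (p + 1) = amplitude u powr 2 * amplitude u powr (p - 1)"
    using powr_add[of "amplitude u" 2 "p - 1"] by (simp add: add.commute)
  also have "\<dots> = (amplitude u)\<^sup>2 * ((p + 1) / 2 * u)"
    using amplitude_powr[OF assms] pos by (simp add: powr_numeral)
  finally show ?thesis using p_gt_1 by (simp add: energy_def level_def field_simps)
qed

lemma Namp_level: "u \<ge> 0 \<Longrightarrow> Namp p (level u) = amplitude u"
  unfolding Namp_def
proof (rule the_equality)
  assume u: "u \<ge> 0"
  show "0 \<le> amplitude u \<and> (amplitude u)\<^sup>2 + 2 / (p + 1) * amplitude u powr (p + 1) = level u"
    using energy_amplitude[OF u] amplitude_nonneg by (simp add: energy_def)
  fix n assume "0 \<le> n \<and> n\<^sup>2 + 2 / (p + 1) * n powr (p + 1) = level u"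
  then show "n = amplitude u"
    using energy_amplitude[OF u] energy_strict_mono[of n "amplitude u"]
      energy_strict_mono[of "amplitude u" n] amplitude_nonneg
    by (metis energy_def linorder_neqE_linordered_idom order_less_irrefl)
qed

lemma Lper_level:
  assumes "u \<ge> 0"
  shows "Lper p (level u) = period u"
proof -
  have "2 / (p + 1) * Namp p (level u) powr (p - 1) = u"
    using Namp_level[OF assms] amplitude_powr[OF assms] p_gt_1 by (simp add: field_simps)
  then have "Lper p (level u) = 4 * integral {0..1} (period_integrand u)"
    unfolding Lper_def period_integrand_def by simp
  then show ?thesis
    using integral_unique[OF has_integral_period_integrand[OF assms]] by simp
qed

lemma level_strict_mono:
  assumes "0 \<le> u" "u < v"
  shows "level u < level v"
proof -
  have "amplitude u < amplitude v"
    using assms p_gt_1 unfolding amplitude_def by (intro powr_less_mono2) auto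
  then have "(amplitude u)\<^sup>2 < (amplitude v)\<^sup>2"
    using amplitude_nonneg by (intro power_strict_mono) auto
  then show ?thesis using assms unfolding level_def by (intro mult_strict_mono) auto
qed

lemma level_surj:
  assumes "c \<ge> 0"
  shows "\<exists>u\<ge>0. level u = c"
proof -
  have c: "continuous_on {0..c + 1} (\<lambda>n::real. n powr (p + 1))"
    by (rule continuous_on_powr') (use p_gt_1 in \<open>auto intro!: continuous_intros\<close>)
  have "continuous_on {0..c + 1} energy"
    unfolding energy_def[abs_def] by (intro continuous_intros c)
  moreover have "energy 0 \<le> c" using assms p_gt_1 by (simp add: energy_def)
  moreover have "c \<le> energy (c + 1)"
  proof -
    have "c \<le> (c + 1)\<^sup>2" using assms by (simp add: power2_eq_square algebra_simps)
    moreover have "0 \<le> 2 / (p + 1) * (c + 1) powr (p + 1)" using p_gt_1 by simp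
    ultimately show ?thesis by (simp add: energy_def)
  qed
  ultimately obtain n where n: "0 \<le> n" "energy n = c"
    using IVT'[of energy 0 c "c + 1"] assms by auto
  define u where "u = 2 / (p + 1) * n powr (p - 1)"
  have u: "u \<ge> 0" using p_gt_1 by (simp add: u_def)
  have "amplitude u = n" using p_gt_1 n(1) by (simp add: amplitude_def u_def powr_powr)
  then have "level u = c" using energy_amplitude[OF u] n by simp
  then show ?thesis using u by blast
qed

lemma bij_betw_level: "bij_betw level {0..} {0..}"
  unfolding bij_betw_def
proof
  show "inj_on level {0..}"
    by (rule inj_onI) (metis atLeast_iff linorder_neqE_linordered_idom order_less_irrefl level_strict_mono)
  show "level ` {0..} = {0..}"
  proof
    show "level ` {0..} \<subseteq> {0..}" by (auto simp: level_def)
    show "{0..} \<subseteq> level ` {0..}" using level_surj by force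
  qed
qed

lemma bij_betw_Lper: "bij_betw (Lper p) {0..} {0<..2*pi}"
proof -
  have "bij_betw period {0..} {0<..2*pi}"
    unfolding bij_betw_def using inj_on_period period_image nonneg_in_Udom
    by (auto intro: inj_on_subset)
  moreover have inv: "bij_betw (inv_into {0..} level) {0..} {0..}"
    by (rule bij_betw_inv_into[OF bij_betw_level])
  ultimately have "bij_betw (period \<circ> inv_into {0..} level) {0..} {0<..2*pi}"
    by (intro bij_betw_trans)
  moreover have "(period \<circ> inv_into {0..} level) c = Lper p c" if "c \<in> {0..}" for c
  proof -
    have "inv_into {0..} level c \<in> {0..}" using inv that by (auto simp: bij_betw_def)
    moreover have "level (inv_into {0..} level c) = c"
      using that bij_betw_level by (simp add: bij_betw_def f_inv_into_f)
    ultimately show ?thesis using Lper_level by (metis atLeast_iff comp_apply)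
  qed
  ultimately show ?thesis using bij_betw_cong by blast
qed

definition Vdom :: "real set" where
  "Vdom = period ` Udom"

definition period_inv :: "real \<Rightarrow> real" where
  "period_inv = inv_into Udom period"

lemma period_inv_period: "u \<in> Udom \<Longrightarrow> period_inv (period u) = u"
  unfolding period_inv_def by (rule inv_into_f_f[OF inj_on_period])

lemma period_period_inv: "s \<in> Vdom \<Longrightarrow> period (period_inv s) = s"
  unfolding period_inv_def Vdom_def by (rule f_inv_into_f)

lemma period_inv_in_Udom: "s \<in> Vdom \<Longrightarrow> period_inv s \<in> Udom"
  unfolding period_inv_def Vdom_def by (rule inv_into_into)

lemma isCont_period: "u \<in> Udom \<Longrightarrow> isCont period u"
  using has_real_derivative_period DERIV_isCont by blast

lemma open_Vdom: "open Vdom"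
proof (rule Topological_Spaces.openI)
  fix s assume "s \<in> Vdom"
  then obtain u where u: "u \<in> Udom" "s = period u" by (auto simp: Vdom_def)
  obtain d where d: "d > 0" "cball u d \<subseteq> Udom"
    using open_contains_cball[THEN iffD1, OF open_Udom] u(1) by blast
  have ud3: "{u - d..u + d} \<subseteq> Udom" using d(2) by (simp add: cball_eq_atLeastAtMost)
  then have ud: "u - d \<in> Udom" "u + d \<in> Udom" "{u - d..u + d} \<subseteq> Udom" using d(1) by auto
  have "{period (u + d)<..<period (u - d)} \<subseteq> Vdom"
  proof
    fix y assume y: "y \<in> {period (u + d)<..<period (u - d)}"
    have "continuous_on {u - d..u + d} period"
      using ud(3) isCont_period by (intro continuous_at_imp_continuous_on) auto
    then obtain x where "u - d \<le> x" "x \<le> u + d" "period x = y"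
      using IVT2'[of period "u + d" y "u - d"] y d by auto
    then show "y \<in> Vdom" using ud(3) by (auto simp: Vdom_def)
  qed
  moreover have "s \<in> {period (u + d)<..<period (u - d)}"
    using period_strict_decreasing[OF u(1) ud(2)] period_strict_decreasing[OF ud(1) u(1)] d u
    by auto
  ultimately show "\<exists>T. open T \<and> s \<in> T \<and> T \<subseteq> Vdom"
    by (intro exI[of _ "{period (u + d)<..<period (u - d)}"]) auto
qed

lemma isCont_period_inv:
  assumes "s \<in> Vdom"
  shows "isCont period_inv s"
proof -
  obtain u where u: "u \<in> Udom" "s = period u" using assms by (auto simp: Vdom_def)
  obtain d where d: "d > 0" "cball u d \<subseteq> Udom"
    using open_contains_cball[THEN iffD1, OF open_Udom] u(1) by blast
  have near: "z \<in> Udom" if "\<bar>z - u\<bar> \<le> d" for z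
    using d(2) that by (auto simp: dist_real_def abs_minus_commute)
  have "isCont period_inv (period u)"
    using d(1) near period_inv_period isCont_period
    by (intro isCont_inverse_function[where f = period and d = d]) auto
  then show ?thesis using u by simp
qed

lemma has_real_derivative_period_inv:
  assumes "s \<in> Vdom"
  shows "(period_inv has_real_derivative 1 / deriv period (period_inv s)) (at s)"
proof -
  obtain e where e: "e > 0" "ball s e \<subseteq> Vdom" using open_Vdom assms openE by blast
  have u: "period_inv s \<in> Udom" using period_inv_in_Udom[OF assms] .
  have "(period_inv has_real_derivative inverse (deriv period (period_inv s))) (at s)"
  proof (rule DERIV_inverse_function[where a = "s - e" and b = "s + e"])
    show "(period has_real_derivative deriv period (period_inv s)) (at (period_inv s))"
      using has_real_derivative_period[OF u] DERIV_imp_deriv by fastforce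
    show "deriv period (period_inv s) \<noteq> 0" using deriv_period_neg[OF u] by simp
    show "\<And>y. s - e < y \<Longrightarrow> y < s + e \<Longrightarrow> period (period_inv y) = y"
      using e by (intro period_period_inv) (auto simp: dist_real_def)
  qed (use e isCont_period_inv[OF assms] in auto)
  then show ?thesis by (simp add: divide_inverse)
qed

lemma Ck_period_inv: "Ck k period_inv Vdom"
proof (induction k)
  case 0
  show ?case using isCont_period_inv by (simp add: continuous_at_imp_continuous_on)
next
  case (Suc k)
  have neg_deriv: "Ck k (\<lambda>u. (- 1) * deriv period u) Udom"
    using Ck_period[of "Suc k"] by (simp only: Ck.simps Ck_cmult[OF open_Udom])
  have "Ck k (\<lambda>u. 1 / ((- 1) * deriv period u)) Udom"
    by (rule Ck_comp[OF open_Udom _ Ck_inverse neg_deriv]) (use deriv_period_neg in auto)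
  then have "Ck k (\<lambda>u. (- 1) * (1 / ((- 1) * deriv period u))) Udom"
    by (rule Ck_cmult[OF open_Udom])
  then have "Ck k (\<lambda>u. 1 / deriv period u) Udom"
    by (rule Ck_cong[OF open_Udom, rotated]) simp
  then have "Ck k (\<lambda>s. 1 / deriv period (period_inv s)) Vdom"
    by (rule Ck_comp[OF open_Vdom open_Udom _ Suc.IH]) (use period_inv_in_Udom in auto)
  then show ?case
    by (rule Ck_SucI[OF open_Vdom, rotated]) (use has_real_derivative_period_inv in auto)
qed

lemma mult_in_Udom: "u \<in> Udom \<Longrightarrow> \<theta> \<in> {0..1} \<Longrightarrow> \<theta> * u \<in> Udom"
  using convex_Udom[unfolded convex_alt, rule_format, of 0 u \<theta>] nonneg_in_Udom[of 0]
  by (simp add: algebra_simps)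

lemma has_real_derivative_iterated_deriv_period:
  "u \<in> Udom \<Longrightarrow> ((deriv ^^ j) period has_real_derivative (deriv ^^ Suc j) period u) (at u)"
  using Ck_iterated_deriv_has_real_derivative[OF Ck_period] by simp

text \<open>\<open>G u = - \<integral>\<^sub>0\<^sup>1 period'(\<theta> u) d\<theta>\<close> is the quotient in Hadamard's lemma, and
  \<open>Dg j u \<theta>\<close> is the \<open>j\<close>-th derivative in \<open>u\<close> of its integrand.\<close>

definition Dg :: "nat \<Rightarrow> real \<Rightarrow> real \<Rightarrow> real" where
  "Dg j u \<theta> = - (\<theta> ^ j) * (deriv ^^ Suc j) period (\<theta> * u)"

definition G :: "real \<Rightarrow> real" where
  "G u = integral {0..1} (Dg 0 u)"

lemma has_real_derivative_Dg:
  assumes "u \<in> Udom" "\<theta> \<in> {0..1}"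
  shows "((\<lambda>u. Dg j u \<theta>) has_real_derivative Dg (Suc j) u \<theta>) (at u)"
proof -
  have "((\<lambda>u. (deriv ^^ Suc j) period (\<theta> * u)) has_real_derivative
          (deriv ^^ Suc (Suc j)) period (\<theta> * u) * \<theta>) (at u)"
    by (rule DERIV_chain2[where g = "\<lambda>u. \<theta> * u",
          OF has_real_derivative_iterated_deriv_period[OF mult_in_Udom[OF assms]]])
       (auto intro!: derivative_eq_intros)
  from DERIV_cmult[OF this, of "- (\<theta> ^ j)"] show ?thesis
    by (simp add: Dg_def[abs_def] algebra_simps del: funpow.simps)
qed

lemma continuous_on_Dg: "continuous_on (Udom \<times> {0..1}) (\<lambda>(u,\<theta>). Dg j u \<theta>)"
proof -
  have "continuous_on Udom ((deriv ^^ Suc j) period)"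
    by (rule Ck_imp_continuous_on[OF Ck_iterated_deriv[of "Suc j" 0, OF Ck_period]])
  then have "continuous_on (Udom \<times> {0..1}) (\<lambda>x. (deriv ^^ Suc j) period (snd x * fst x))"
    by (rule continuous_on_compose2) (auto intro!: continuous_intros mult_in_Udom)
  then have "continuous_on (Udom \<times> {0..1}) (\<lambda>x. - (snd x ^ j) * (deriv ^^ Suc j) period (snd x * fst x))"
    by (intro continuous_intros)
  then show ?thesis by (simp add: Dg_def case_prod_beta' del: funpow.simps)
qed

lemma Ck_G: "Ck k G Udom"
  unfolding G_def[abs_def]
  by (rule Ck_param_integral[of Udom Dg, OF open_Udom convex_Udom has_real_derivative_Dg continuous_on_Dg])

lemma two_pi_minus_period:
  assumes u: "u \<in> Udom"
  shows "2 * pi - period u = u * G u"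
proof -
  have "((\<lambda>\<theta>. u * deriv period (\<theta> * u)) has_integral period (1 * u) - period (0 * u)) {0..1}"
  proof (rule fundamental_theorem_of_calculus)
    fix \<theta> :: real assume "\<theta> \<in> {0..1}"
    then have "((\<lambda>\<theta>. period (\<theta> * u)) has_real_derivative deriv period (\<theta> * u) * u) (at \<theta>)"
      using has_real_derivative_iterated_deriv_period[of _ 0] mult_in_Udom[OF u]
      by (intro DERIV_chain2[where g = "\<lambda>\<theta>. \<theta> * u"]) (auto intro!: derivative_eq_intros)
    then show "((\<lambda>\<theta>. period (\<theta> * u)) has_vector_derivative u * deriv period (\<theta> * u))
                 (at \<theta> within {0..1})"
      by (auto simp: has_real_derivative_iff_has_vector_derivative[symmetric] mult.commute
               intro: has_field_derivative_at_within)
  qed simp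
  moreover have "((\<lambda>\<theta>. - u * Dg 0 u \<theta>) has_integral - u * G u) {0..1}"
    unfolding G_def using continuous_on_section[OF continuous_on_Dg u]
    by (intro has_integral_mult_right integrable_integral integrable_continuous_interval)
  ultimately have "period u - 2 * pi = - u * G u"
    using period_0 by (simp add: Dg_def has_integral_unique)
  then show ?thesis by simp
qed

lemma G_pos:
  assumes u: "u \<in> Udom"
  shows "G u > 0"
proof -
  consider "u < 0" | "u = 0" | "u > 0" by linarith
  then show ?thesis
  proof cases
    case 1
    then have "period u > 2 * pi"
      using period_strict_decreasing[OF u nonneg_in_Udom[of 0]] period_0 by simp
    then have "u * G u < 0" using two_pi_minus_period[OF u] by simp
    then show ?thesis using 1 by (simp add: mult_less_0_iff)
  next
    case 2
    have "Dg 0 0 = (\<lambda>\<theta>. - deriv period 0)" by (simp add: Dg_def fun_eq_iff)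
    then show ?thesis
      using deriv_period_neg[OF nonneg_in_Udom[of 0]] 2 by (simp add: G_def)
  next
    case 3
    then have "period u < 2 * pi"
      using period_strict_decreasing[OF nonneg_in_Udom[of 0] u] period_0 by simp
    then have "u * G u > 0" using two_pi_minus_period[OF u] by simp
    then show ?thesis using 3 by (simp add: zero_less_mult_iff)
  qed
qed

text \<open>Near \<open>2\<pi>\<close> the inverse period map is \<open>(2\<pi> - s)\<^bsup>2/(p-1)\<^esup> W s\<close>: combine
  \<open>level u = kappa u\<^bsup>2/(p-1)\<^esup> (1 + u)\<close> with \<open>u = (2\<pi> - s) / G u\<close>.\<close>

definition kappa :: real where
  "kappa = ((p + 1) / 2) powr (2 / (p - 1))"

definition W :: "real \<Rightarrow> real" where
  "W s = kappa * G (period_inv s) powr (- (2 / (p - 1))) * (1 + period_inv s)"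

lemma Ck_W: "Ck k W Vdom"
proof -
  have GP: "Ck k (\<lambda>s. G (period_inv s)) Vdom"
    by (rule Ck_comp[OF open_Vdom open_Udom Ck_G Ck_period_inv]) (use period_inv_in_Udom in auto)
  have "Ck k (\<lambda>s. kappa * G (period_inv s) powr (- (2 / (p - 1)))) Vdom"
    by (rule Ck_comp[OF open_Vdom _ Ck_powr GP]) (use G_pos period_inv_in_Udom in auto)
  moreover have "Ck k (\<lambda>s. 1 + period_inv s) Vdom"
    by (rule Ck_add[OF open_Vdom Ck_const Ck_period_inv])
  ultimately show ?thesis
    unfolding W_def[abs_def] by (rule Ck_mult[OF open_Vdom])
qed

lemma W_pos:
  assumes "s \<in> Vdom"
  shows "W s > 0"
proof -
  have "1 + period_inv s > 0" "G (period_inv s) > 0"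
    using G_pos[OF period_inv_in_Udom[OF assms]] Udom_gt_minus_1[OF period_inv_in_Udom[OF assms]]
    by auto
  then show ?thesis using p_gt_1 by (auto simp: W_def kappa_def intro!: mult_pos_pos)
qed

lemma period_inv_nonneg:
  assumes "s \<in> {0<..2*pi}"
  shows "s \<in> Vdom" "period_inv s \<ge> 0"
proof -
  obtain u where u: "u \<ge> 0" "period u = s" using assms period_image by (metis atLeast_iff imageE)
  then show "s \<in> Vdom" using nonneg_in_Udom by (auto simp: Vdom_def)
  show "period_inv s \<ge> 0" using u period_inv_period nonneg_in_Udom by auto
qed

lemma inv_Lper_eq_level:
  assumes "s \<in> {0<..2*pi}"
  shows "inv_into {0..} (Lper p) s = level (period_inv s)"
proof (rule inv_into_f_eq)
  show "inj_on (Lper p) {0..}" using bij_betw_Lper by (simp add: bij_betw_def)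
  show "level (period_inv s) \<in> {0..}" using period_inv_nonneg[OF assms] by (simp add: level_def)
  show "Lper p (level (period_inv s)) = s"
    using Lper_level period_inv_nonneg[OF assms] period_period_inv by simp
qed

lemma level_eq_powr:
  assumes "u > 0"
  shows "level u = kappa * u powr (2 / (p - 1)) * (1 + u)"
proof -
  have "(amplitude u)\<^sup>2 = ((p + 1) / 2 * u) powr (2 / (p - 1))"
    using assms p_gt_1 by (simp add: amplitude_def powr_powr flip: powr_numeral)
  also have "\<dots> = ((p + 1) / 2) powr (2 / (p - 1)) * u powr (2 / (p - 1))"
    using assms p_gt_1 by (intro powr_mult)
  also have "\<dots> = kappa * u powr (2 / (p - 1))"
    by (simp add: kappa_def)
  finally show ?thesis by (simp add: level_def)
qed

lemma inv_Lper_eq_power_times_W: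
  assumes s: "s \<in> {0<..<2*pi}"
  shows "inv_into {0..} (Lper p) s = (2*pi - s) powr (2 / (p - 1)) * W s"
proof -
  define u where "u = period_inv s"
  have V: "s \<in> Vdom" and "u \<ge> 0" using period_inv_nonneg s by (auto simp: u_def)
  moreover have "u \<noteq> 0" using period_period_inv[OF V] period_0 s by (auto simp: u_def)
  ultimately have u: "u > 0" by simp
  have G: "G u > 0" using G_pos period_inv_in_Udom[OF V] by (simp add: u_def)
  have "u = (2*pi - s) / G u"
    using two_pi_minus_period[OF period_inv_in_Udom[OF V]] period_period_inv[OF V] G
    by (simp add: u_def field_simps)
  then have "u powr (2 / (p - 1)) = (2*pi - s) powr (2 / (p - 1)) * G u powr (- (2 / (p - 1)))"
    using G s by (metis powr_divide powr_minus_divide less_eq_real_def diff_gt_0_iff_gt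
                   divide_inverse greaterThanLessThan_iff inverse_eq_divide)
  then show ?thesis
    using inv_Lper_eq_level[of s] level_eq_powr[OF u] s by (simp add: W_def u_def)
qed

lemma Ck_inv_Lper: "Ck k (inv_into {0..} (Lper p)) {0<..<2*pi}"
proof -
  have sub: "{0<..<2*pi} \<subseteq> Vdom" using period_inv_nonneg by auto
  have W: "Ck k W {0<..<2*pi}" by (rule Ck_subset[OF _ sub Ck_W]) simp
  have "Ck k (\<lambda>s. 1 * (2*pi + (- 1) * s) powr (2 / (p - 1))) {0<..<2*pi}"
    by (rule Ck_comp[OF _ _ Ck_powr Ck_affine]) auto
  then have "Ck k (\<lambda>s. (1 * (2*pi + (- 1) * s) powr (2 / (p - 1))) * W s) {0<..<2*pi}"
    using W by (rule Ck_mult[rotated]) simp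
  then show ?thesis
    by (rule Ck_cong[rotated 2]) (simp_all add: inv_Lper_eq_power_times_W)
qed

lemma ball_2pi_subset_Vdom: "\<exists>r>0. r \<le> 2*pi \<and> ball (2*pi) r \<subseteq> Vdom"
proof -
  have "2*pi \<in> Vdom" using period_inv_nonneg[of "2*pi"] by simp
  then obtain e where "e > 0" "ball (2*pi) e \<subseteq> Vdom" using open_Vdom openE by blast
  then show ?thesis
    by (intro exI[of _ "min e (2*pi)"]) auto
qed

end

section \<open>The inverse period map\<close>

lemma asymp_2piI:
  assumes "(\<lambda>s. f s - C' * (2*pi - s) powr e') \<in> O[at_left (2*pi)](\<lambda>s. (2*pi - s) powr (e' + 1))"
    and "C' = C" "e' = e"
  shows "asymp_2pi f C e"
  using assms unfolding asymp_2pi_def by simp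

lemma sqrt_powr_mult: "h \<ge> 0 \<Longrightarrow> sqrt (h powr (2 * e) * w) = h powr e * sqrt w"
  by (simp add: real_sqrt_mult powr_half_sqrt[symmetric] powr_powr)

theorem lemma2p6:
  fixes p :: real
  assumes "p > 1"
  defines "M \<equiv> inv_into {0..} (Lper p)"
  shows "bij_betw (Lper p) {0..} {0<..2*pi}
    \<and> smooth_on_real M {0<..<2*pi}
    \<and> (\<exists>\<alpha>>0.
         asymp_2pi M \<alpha> (2 / (p - 1))
       \<and> asymp_2pi (\<lambda>s. sqrt (M s)) (sqrt \<alpha>) (1 / (p - 1))
       \<and> asymp_2pi (deriv M) (- 2 * \<alpha> / (p - 1)) ((3 - p) / (p - 1))
       \<and> asymp_2pi (deriv (\<lambda>s. sqrt (M s))) (- sqrt \<alpha> / (p - 1)) ((2 - p) / (p - 1))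
       \<and> asymp_2pi (deriv (deriv M)) (2 * \<alpha> * (3 - p) / (p - 1)\<^sup>2) ((4 - 2 * p) / (p - 1))
       \<and> asymp_2pi (deriv (deriv (\<lambda>s. sqrt (M s)))) (sqrt \<alpha> * (2 - p) / (p - 1)\<^sup>2)
            ((3 - 2 * p) / (p - 1)))"
proof -
  interpret superlinear_power p using assms by unfold_locales
  have p: "p - 1 \<noteq> 0" using assms by simp
  obtain r where r: "r > 0" "r \<le> 2*pi" "ball (2*pi) r \<subseteq> Vdom"
    using ball_2pi_subset_Vdom by blast
  have W: "Ck 3 W (ball (2*pi) r)" and sqrt_W: "Ck 3 (\<lambda>s. sqrt (W s)) (ball (2*pi) r)"
    using r(3) W_pos by (auto intro!: Ck_subset[OF _ _ Ck_W] Ck_comp[OF _ _ Ck_sqrt])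
  have M: "M s = (2*pi - s) powr (2 / (p - 1)) * W s"
    and sqrt_M: "sqrt (M s) = (2*pi - s) powr (1 / (p - 1)) * sqrt (W s)"
    if "s \<in> {2*pi - r<..<2*pi}" for s
    using that r(2) inv_Lper_eq_power_times_W[of s] sqrt_powr_mult[of "2*pi - s" "1 / (p - 1)"]
    by (auto simp: M_def)
  note M_exp = power_times_Ck3_expansions[OF r(1) W M]
  note S_exp = power_times_Ck3_expansions[OF r(1) sqrt_W sqrt_M]
  show ?thesis
  proof (intro conjI exI[of _ "W (2*pi)"])
    show "bij_betw (Lper p) {0..} {0<..2*pi}" by (rule bij_betw_Lper)
    show "smooth_on_real M {0<..<2*pi}"
      unfolding smooth_on_real_def M_def using Ck_iterated_deriv_differentiable[OF Ck_inv_Lper] by blast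
    show "W (2*pi) > 0" using r(1,3) by (intro W_pos) auto
    show "asymp_2pi M (W (2*pi)) (2 / (p - 1))"
      by (rule asymp_2piI[OF M_exp(1)]) simp_all
    show "asymp_2pi (\<lambda>s. sqrt (M s)) (sqrt (W (2*pi))) (1 / (p - 1))"
      by (rule asymp_2piI[OF S_exp(1)]) simp_all
    show "asymp_2pi (deriv M) (- 2 * W (2*pi) / (p - 1)) ((3 - p) / (p - 1))"
      by (rule asymp_2piI[OF M_exp(2)]) (use p in \<open>simp_all add: field_simps\<close>)
    show "asymp_2pi (deriv (\<lambda>s. sqrt (M s))) (- sqrt (W (2*pi)) / (p - 1)) ((2 - p) / (p - 1))"
      by (rule asymp_2piI[OF S_exp(2)]) (use p in \<open>simp_all add: field_simps\<close>)
    show "asymp_2pi (deriv (deriv M)) (2 * W (2*pi) * (3 - p) / (p - 1)\<^sup>2) ((4 - 2 * p) / (p - 1))"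
      by (rule asymp_2piI[OF M_exp(3)]) (use p in \<open>simp_all add: field_simps power2_eq_square\<close>)
    show "asymp_2pi (deriv (deriv (\<lambda>s. sqrt (M s)))) (sqrt (W (2*pi)) * (2 - p) / (p - 1)\<^sup>2)
            ((3 - 2 * p) / (p - 1))"
      by (rule asymp_2piI[OF S_exp(3)]) (use p in \<open>simp_all add: field_simps power2_eq_square\<close>)
  qed
qed

end
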